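(* Fix a positive integer $N$ and a real $c>0$. For each integer $K\ge2$ let $M_K$ be a positive integer, with $M_K/(KN)\to c$ as $K\to\infty$, and let $$d^*_\mathrm{sum}(K)=\min\left\{\frac{3M_K}{2},\ \max\left\{M_K+\frac{5M_KN}{9M_K+N},\ \frac{\sqrt{3K}N}{2}\right\},\ M_K+\frac{KN^2}{3M_K},\ KN\right\}$$ be the achievable total DoF of the symmetric multi-relay MIMO Y channel with three $M_K$-antenna users and $K$ relays with $N$ antennas each. Then, with $N_\mathrm{total}=KN$, $\lim_{K\to\infty}\frac{d^*_\mathrm{sum}(K)}{N_\mathrm{total}}=\min\{c,1\}$, i.e. asymptotically $\frac{d^*_\mathrm{sum}}{N_\mathrm{total}}=\min\left\{\frac{M}{N_\mathrm{total}},1\right\}$.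
   Context: In the symmetric multi-relay MIMO Y channel (three users with $M$ antennas each exchanging messages pairwise via $K$ half-duplex relays with $N$ antennas each), $d^*_\mathrm{sum}$ denotes the total DoF shown achievable in the paper: $d^*_\mathrm{sum}=\min\{\frac{3M}{2},\max\{M+\frac{5MN}{9M+N},\frac{\sqrt{3K}N}{2}\},M+\frac{KN^2}{3M},KN\}$. $N_\mathrm{total}=KN$ is the total number of relay antennas. *)

theory Defs
  imports Complex_Main
begin

definition dsum_star :: "nat \<Rightarrow> nat \<Rightarrow> nat \<Rightarrow> real" where
  "dsum_star M K N =
     Min {3 * real M / 2,
          max (real M + 5 * real M * real N / (9 * real M + real N))
              (sqrt (3 * real K) * real N / 2),
          real M + real K * (real N)^2 / (3 * real M),
          real K * real N}"

end

theory Submission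
  imports Defs "HOL-Real_Asymp.Real_Asymp"
begin

text \<open>Normalising by \<open>N_total = K N\<close> and writing \<open>x = M / N_total\<close>, the four terms of \<open>d*_sum\<close>
  become \<open>3x/2\<close>, \<open>max (x + O(1/K)) (\<surd>(3K)/(2K))\<close>, \<open>x + 1/(3Kx)\<close> and \<open>1\<close>. As \<open>x \<rightarrow> c > 0\<close>
  all correction terms vanish, leaving the minimum of \<open>3c/2\<close>, \<open>c\<close>, \<open>c\<close> and \<open>1\<close>, i.e. \<open>min c 1\<close>.
  The hypothesis \<open>M K > 0\<close> is not needed: for \<open>M = 0\<close> both \<open>K N\<^sup>2/(3M)\<close> and \<open>1/(3Kx)\<close> take the
  junk value \<open>0\<close>, so the normal form below holds for all \<open>M\<close>.\<close>

lemma dsum_star_div_total_antennas: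
  fixes M K N :: nat
  assumes "K > 0" and "N > 0"
  defines "x \<equiv> real M / (real K * real N)"
  shows "dsum_star M K N / (real K * real N) =
    min (3/2 * x)
      (min (max (x + 5 * real M * real N / (9 * real M + real N) / (real K * real N))
                (sqrt (3 * real K) / (2 * real K)))
           (min (x + 1 / (3 * real K * x)) 1))"
proof -
  have "3 * real M / 2 / (real K * real N) = 3/2 * x"
    by (simp add: x_def)
  moreover have "(real M + 5 * real M * real N / (9 * real M + real N)) / (real K * real N)
      = x + 5 * real M * real N / (9 * real M + real N) / (real K * real N)"
    by (simp add: x_def add_divide_distrib)
  moreover have "sqrt (3 * real K) * real N / 2 / (real K * real N) = sqrt (3 * real K) / (2 * real K)"
    using assms by simp
  moreover have "(real M + real K * (real N)\<^sup>2 / (3 * real M)) / (real K * real N)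
      = x + 1 / (3 * real K * x)"
    using assms by (cases "M = 0") (simp_all add: x_def field_simps power2_eq_square)
  moreover have "real K * real N / (real K * real N) = 1"
    using assms by simp
  ultimately show ?thesis
    using assms(1,2) unfolding dsum_star_def
    by (simp add: min_divide_distrib_right max_divide_distrib_right
        del: times_divide_eq_left divide_divide_eq_left)
qed

lemma relay_gain_le:
  fixes m n :: real
  assumes "0 \<le> m" and "0 \<le> n"
  shows "5 * m * n / (9 * m + n) \<le> 5 * n / 9"
proof (cases "m = 0")
  case False
  with assms have "5 * m * n / (9 * m + n) \<le> 5 * m * n / (9 * m)"
    by (intro divide_left_mono) auto
  with False show ?thesis by simp
qed (use assms in simp)

lemma relay_gain_div_total_tendsto_0:
  fixes M :: "nat \<Rightarrow> nat"
  assumes "N > 0"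
  shows "(\<lambda>K. 5 * real (M K) * real N / (9 * real (M K) + real N) / (real K * real N)) \<longlonglongrightarrow> 0"
proof (rule tendsto_sandwich[of "\<lambda>_. 0" _ _ "\<lambda>K. 5 / (9 * real K)"])
  show "\<forall>\<^sub>F K in sequentially.
      5 * real (M K) * real N / (9 * real (M K) + real N) / (real K * real N) \<le> 5 / (9 * real K)"
  proof (rule eventually_sequentiallyI[of 1])
    fix K :: nat
    assume "K \<ge> 1"
    then have "5 * real (M K) * real N / (9 * real (M K) + real N) / (real K * real N)
        \<le> 5 * real N / 9 / (real K * real N)"
      by (intro divide_right_mono relay_gain_le) auto
    also have "\<dots> = 5 / (9 * real K)"
      using assms by simp
    finally show "5 * real (M K) * real N / (9 * real (M K) + real N) / (real K * real N)
        \<le> 5 / (9 * real K)" .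
  qed
  show "(\<lambda>K. 5 / (9 * real K)) \<longlonglongrightarrow> 0"
    by real_asymp
qed auto

theorem corollary4:
  fixes N :: nat and c :: real and M :: "nat \<Rightarrow> nat"
  assumes "N > 0" and "c > 0"
    and "\<forall>K\<ge>2. M K > 0"
    and "(\<lambda>K. real (M K) / (real K * real N)) \<longlonglongrightarrow> c"
  shows "(\<lambda>K. dsum_star (M K) K N / (real K * real N)) \<longlonglongrightarrow> min c 1"
proof -
  define x where "x = (\<lambda>K. real (M K) / (real K * real N))"
  define gain where "gain = (\<lambda>K. 5 * real (M K) * real N / (9 * real (M K) + real N) / (real K * real N))"
  define h where "h = (\<lambda>K::nat. sqrt (3 * real K) / (2 * real K))"
  define r where "r = (\<lambda>K. 1 / (3 * real K * x K))"
  have x: "x \<longlonglongrightarrow> c"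
    using assms(4) by (simp add: x_def)
  have gain: "gain \<longlonglongrightarrow> 0"
    unfolding gain_def using assms(1) by (rule relay_gain_div_total_tendsto_0)
  have h: "h \<longlonglongrightarrow> 0"
    unfolding h_def by real_asymp
  have "(\<lambda>K. inverse (3 * real K) * inverse (x K)) \<longlonglongrightarrow> 0 * inverse c"
    using assms(2) by (intro tendsto_mult tendsto_inverse x) (real_asymp, simp)
  moreover have "r = (\<lambda>K. inverse (3 * real K) * inverse (x K))"
    by (simp add: r_def fun_eq_iff inverse_eq_divide)
  ultimately have r: "r \<longlonglongrightarrow> 0"
    by simp
  have "(\<lambda>K. min (3/2 * x K) (min (max (x K + gain K) (h K)) (min (x K + r K) 1)))
      \<longlonglongrightarrow> min (3/2 * c) (min (max (c + 0) 0) (min (c + 0) 1))"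
    by (intro tendsto_intros x gain h r)
  also have "min (3/2 * c) (min (max (c + 0) 0) (min (c + 0) 1)) = min c 1"
    using assms(2) by (simp add: min_def max_def)
  finally show ?thesis
  proof (rule tendsto_cong[THEN iffD1, rotated])
    show "\<forall>\<^sub>F K in sequentially. min (3/2 * x K) (min (max (x K + gain K) (h K)) (min (x K + r K) 1))
        = dsum_star (M K) K N / (real K * real N)"
      using dsum_star_div_total_antennas assms(1)
      by (intro eventually_sequentiallyI[of 1]) (simp add: x_def gain_def h_def r_def)
  qed
qed

end
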